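(* For every finite simplicial complex $K$, the $1$-skeletons of $\mathcal{M}(K)$ and $\mathcal{GM}(K)$ coincide (every matching on $\mathcal{H}(K)$ consisting of at most two edges is acyclic). Consequently the inclusion $\mathcal{M}(K)\hookrightarrow\mathcal{GM}(K)$ induces a surjection on fundamental groups, and if $\mathcal{M}(K)$ is simply connected then so is $\mathcal{GM}(K)$.
   Context: All simplicial complexes are finite abstract simplicial complexes; simplices are nonempty. The Hasse diagram $\mathcal{H}(K)$ of $K$ is the directed graph whose vertices are the simplices of $K$, with an edge $\sigma\to\tau$ whenever $\sigma\subsetneq\tau$ and $\dim\tau=\dim\sigma+1$. A matching on $\mathcal{H}(K)$ is a set $W$ of edges of $\mathcal{H}(K)$, no two sharing a vertex. $W$ is acyclic if the directed graph obtained from $\mathcal{H}(K)$ by reversing every edge in $W$ has no directed cycle. The complex of discrete Morse matchings $\mathcal{M}(K)$ is the simplicial complex whose vertices are the edges of $\mathcal{H}(K)$ and whose simplices are the nonempty acyclic matchings on $\mathcal{H}(K)$. The generalized complex $\mathcal{GM}(K)$ is the simplicial complex whose vertices are the edges of $\mathcal{H}(K)$ and whose simplices are all nonempty matchings on $\mathcal{H}(K)$ (no acyclicity required); thus $\mathcal{M}(K)\subseteq\mathcal{GM}(K)$. *)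

theory Defs
  imports "HOL-Analysis.Analysis"
begin

definition simplicial_complex :: "'v set set \<Rightarrow> bool" where
  "simplicial_complex K \<equiv> finite K \<and>
     (\<forall>\<sigma>\<in>K. \<sigma> \<noteq> {} \<and> finite \<sigma>) \<and>
     (\<forall>\<sigma>\<in>K. \<forall>\<tau>. \<tau> \<subseteq> \<sigma> \<and> \<tau> \<noteq> {} \<longrightarrow> \<tau> \<in> K)"

definition hasse_edges :: "'v set set \<Rightarrow> ('v set \<times> 'v set) set" where
  "hasse_edges K = {(\<sigma>, \<tau>). \<sigma> \<in> K \<and> \<tau> \<in> K \<and> \<sigma> \<subset> \<tau> \<and> card \<tau> = Suc (card \<sigma>)}"

definition hasse_matching :: "'v set set \<Rightarrow> ('v set \<times> 'v set) set \<Rightarrow> bool" where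
  "hasse_matching K W \<equiv> W \<subseteq> hasse_edges K \<and>
     (\<forall>e\<in>W. \<forall>e'\<in>W. e \<noteq> e' \<longrightarrow> {fst e, snd e} \<inter> {fst e', snd e'} = {})"

definition acyclic_matching :: "'v set set \<Rightarrow> ('v set \<times> 'v set) set \<Rightarrow> bool" where
  "acyclic_matching K W \<equiv> acyclic ((hasse_edges K - W) \<union> converse W)"

definition morse_complex :: "'v set set \<Rightarrow> ('v set \<times> 'v set) set set" where
  "morse_complex K = {W. W \<noteq> {} \<and> hasse_matching K W \<and> acyclic_matching K W}"

definition gen_morse_complex :: "'v set set \<Rightarrow> ('v set \<times> 'v set) set set" where
  "gen_morse_complex K = {W. W \<noteq> {} \<and> hasse_matching K W}"

definition one_skeleton :: "'a set set \<Rightarrow> 'a set set" where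
  "one_skeleton L = {\<sigma> \<in> L. card \<sigma> \<le> 2}"

text \<open>Standard geometric realization of a finite abstract simplicial complex L:
  barycentric coordinate functions whose support is a simplex of L, with the
  topology induced from the product topology on 'a \<Rightarrow> real.\<close>
definition geom_real_set :: "'a set set \<Rightarrow> ('a \<Rightarrow> real) set" where
  "geom_real_set L = {x. (\<forall>v. 0 \<le> x v) \<and> {v. x v \<noteq> 0} \<in> L \<and> sum x {v. x v \<noteq> 0} = 1}"

definition geom_real :: "'a set set \<Rightarrow> ('a \<Rightarrow> real) topology" where
  "geom_real L = subtopology (powertop_real UNIV) (geom_real_set L)"

definition path_homotopic :: "'a topology \<Rightarrow> (real \<Rightarrow> 'a) \<Rightarrow> (real \<Rightarrow> 'a) \<Rightarrow> bool" where
  "path_homotopic X p q \<equiv>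
     homotopic_with (\<lambda>r. r 0 = p 0 \<and> r 1 = p 1) (top_of_set {0..1}) X p q"

definition simply_connected_space :: "'a topology \<Rightarrow> bool" where
  "simply_connected_space X \<equiv> path_connected_space X \<and>
     (\<forall>p. pathin X p \<and> p 1 = p 0 \<longrightarrow> path_homotopic X p (\<lambda>_. p 0))"

end

(* Reversing the edges of a matching W in the Hasse diagram leaves the reversed edges as the only
   ones going down. If W = {(s1, t1), (s2, t2)} produced a cycle, the cycle would have to use both
   reversed edges (an upward path from s to t with card t = card s + 1 is the edge (s, t) itself),
   hence contain upward paths from s2 to t1 and from s1 to t2. Then s1 and s2 are distinct
   codimension-one faces of both t1 and t2, so t1 = s1 \<union> s2 = t2, contradicting that W is a
   matching.

   Given a loop p in |GM(K)| based at a point of |M(K)|, a Lebesgue number argument yields vertices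
   v_k (edges of the Hasse diagram) such that the v_k-coordinate of p(t) is positive whenever
   |t - k/m| < 1/m. The piecewise linear loop q through these vertices, and through the base point
   at both ends, is carried at every time either by the simplex of the base point or by at most
   two of the vertices, i.e. by an acyclic matching, so it lies in |M(K)|; as the support of q(t)
   is contained in that of p(t), the straight-line homotopy from p to q stays in |GM(K)|. For simple connectivity, every point of |GM(K)| is joined
   by a segment to a vertex, which lies in |M(K)|, so base points can be moved into |M(K)|. *)

theory Submission
  imports Defs
begin

section \<open>Matchings with at most two edges are acyclic\<close>

lemma hasse_edges_trancl:
  assumes "(\<sigma>, \<tau>) \<in> (hasse_edges K)\<^sup>+"
  shows "\<sigma> \<subset> \<tau> \<and> card \<sigma> < card \<tau>"
  using assms by (induction rule: trancl_induct) (auto simp: hasse_edges_def)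

lemma hasse_edges_rtrancl_subset: "(\<sigma>, \<tau>) \<in> (hasse_edges K)\<^sup>* \<Longrightarrow> \<sigma> \<subseteq> \<tau>"
  by (auto simp: rtrancl_eq_or_trancl dest: hasse_edges_trancl)

lemma acyclic_hasse_edges: "acyclic (hasse_edges K)"
  unfolding acyclic_def using hasse_edges_trancl by blast

lemma hasse_edge_in_rtrancl_imp_mem:
  assumes R: "R \<subseteq> hasse_edges K" and e: "(\<sigma>, \<tau>) \<in> hasse_edges K" and "(\<sigma>, \<tau>) \<in> R\<^sup>*"
  shows "(\<sigma>, \<tau>) \<in> R"
proof -
  have "\<sigma> \<noteq> \<tau>" using e by (auto simp: hasse_edges_def)
  with \<open>(\<sigma>, \<tau>) \<in> R\<^sup>*\<close> obtain \<rho> where \<rho>: "(\<sigma>, \<rho>) \<in> R\<^sup>*" "(\<rho>, \<tau>) \<in> R"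
    by (meson rtranclE)
  have "\<sigma> = \<rho>"
  proof (rule ccontr)
    assume "\<sigma> \<noteq> \<rho>"
    with \<rho>(1) have "(\<sigma>, \<rho>) \<in> R\<^sup>+" by (simp add: rtrancl_eq_or_trancl)
    then have "(\<sigma>, \<rho>) \<in> (hasse_edges K)\<^sup>+" using R trancl_mono by blast
    then have "card \<sigma> < card \<rho>" by (simp add: hasse_edges_trancl)
    moreover have "card \<tau> = Suc (card \<rho>)" "card \<tau> = Suc (card \<sigma>)"
      using \<rho>(2) R e by (auto simp: hasse_edges_def)
    ultimately show False by simp
  qed
  with \<rho>(2) show ?thesis by simp
qed

lemma codim_one_faces_union:
  assumes "\<sigma>\<^sub>1 \<subset> \<tau>" "\<sigma>\<^sub>2 \<subset> \<tau>" "card \<tau> = Suc (card \<sigma>\<^sub>1)" "card \<sigma>\<^sub>2 = card \<sigma>\<^sub>1" "\<sigma>\<^sub>1 \<noteq> \<sigma>\<^sub>2"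
  shows "\<tau> = \<sigma>\<^sub>1 \<union> \<sigma>\<^sub>2"
proof -
  have "finite \<tau>" using assms(3) card.infinite by fastforce
  then have fin: "finite \<sigma>\<^sub>1" "finite \<sigma>\<^sub>2" using assms(1,2) finite_subset by blast+
  then have "\<not> \<sigma>\<^sub>2 \<subseteq> \<sigma>\<^sub>1" using assms(4,5) card_subset_eq by blast
  then have "card \<sigma>\<^sub>1 < card (\<sigma>\<^sub>1 \<union> \<sigma>\<^sub>2)" using fin by (intro psubset_card_mono) auto
  then have "card \<tau> \<le> card (\<sigma>\<^sub>1 \<union> \<sigma>\<^sub>2)" using assms(3) by simp
  moreover have "\<sigma>\<^sub>1 \<union> \<sigma>\<^sub>2 \<subseteq> \<tau>" using assms(1,2) by blast
  ultimately show ?thesis using card_seteq[OF \<open>finite \<tau>\<close>] by blast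
qed

lemma hasse_edges_crossing_eq:
  assumes "(\<sigma>\<^sub>1, \<tau>\<^sub>1) \<in> hasse_edges K" "(\<sigma>\<^sub>2, \<tau>\<^sub>2) \<in> hasse_edges K"
    and "\<sigma>\<^sub>2 \<subset> \<tau>\<^sub>1" "\<sigma>\<^sub>1 \<subset> \<tau>\<^sub>2" "\<sigma>\<^sub>1 \<noteq> \<sigma>\<^sub>2"
  shows "\<tau>\<^sub>1 = \<tau>\<^sub>2"
proof -
  have e: "\<sigma>\<^sub>1 \<subset> \<tau>\<^sub>1" "card \<tau>\<^sub>1 = Suc (card \<sigma>\<^sub>1)" "\<sigma>\<^sub>2 \<subset> \<tau>\<^sub>2" "card \<tau>\<^sub>2 = Suc (card \<sigma>\<^sub>2)"
    using assms(1,2) by (auto simp: hasse_edges_def)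
  then have "finite \<tau>\<^sub>1" "finite \<tau>\<^sub>2" using card.infinite by fastforce+
  then have "card \<sigma>\<^sub>2 < card \<tau>\<^sub>1" "card \<sigma>\<^sub>1 < card \<tau>\<^sub>2"
    using assms(3,4) psubset_card_mono by blast+
  then have card_eq: "card \<sigma>\<^sub>2 = card \<sigma>\<^sub>1" using e(2,4) by linarith
  have "\<tau>\<^sub>1 = \<sigma>\<^sub>1 \<union> \<sigma>\<^sub>2"
    using e(1) assms(3) e(2) card_eq assms(5) by (rule codim_one_faces_union)
  moreover have "\<tau>\<^sub>2 = \<sigma>\<^sub>2 \<union> \<sigma>\<^sub>1"
    using e(3) assms(4) e(4) card_eq[symmetric] assms(5)[symmetric] by (rule codim_one_faces_union)
  ultimately show ?thesis by blast
qed

lemma acyclic_matching_pair: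
  assumes M: "hasse_matching K {(\<sigma>\<^sub>1, \<tau>\<^sub>1), (\<sigma>\<^sub>2, \<tau>\<^sub>2)}" (is "hasse_matching K ?W")
  shows "acyclic_matching K ?W"
proof -
  define R where "R = hasse_edges K - ?W"
  have e: "(\<sigma>\<^sub>1, \<tau>\<^sub>1) \<in> hasse_edges K" "(\<sigma>\<^sub>2, \<tau>\<^sub>2) \<in> hasse_edges K"
    using M by (auto simp: hasse_matching_def)
  have R: "R \<subseteq> hasse_edges K" unfolding R_def by blast
  have not_up: "(\<sigma>\<^sub>1, \<tau>\<^sub>1) \<notin> R\<^sup>*" "(\<sigma>\<^sub>2, \<tau>\<^sub>2) \<notin> R\<^sup>*"
    using hasse_edge_in_rtrancl_imp_mem[OF R] e unfolding R_def by blast+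
  have no_zigzag: "\<not> ((\<sigma>\<^sub>2, \<tau>\<^sub>1) \<in> R\<^sup>* \<and> (\<sigma>\<^sub>1, \<tau>\<^sub>2) \<in> R\<^sup>*)"
  proof
    assume zigzag: "(\<sigma>\<^sub>2, \<tau>\<^sub>1) \<in> R\<^sup>* \<and> (\<sigma>\<^sub>1, \<tau>\<^sub>2) \<in> R\<^sup>*"
    show False
    proof (cases "(\<sigma>\<^sub>1, \<tau>\<^sub>1) = (\<sigma>\<^sub>2, \<tau>\<^sub>2)")
      case True
      then show False using zigzag not_up by simp
    next
      case False
      then have "{\<sigma>\<^sub>1, \<tau>\<^sub>1} \<inter> {\<sigma>\<^sub>2, \<tau>\<^sub>2} = {}" using M by (auto simp: hasse_matching_def)
      moreover have "\<sigma>\<^sub>2 \<subseteq> \<tau>\<^sub>1" "\<sigma>\<^sub>1 \<subseteq> \<tau>\<^sub>2"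
        using zigzag rtrancl_mono[OF R] hasse_edges_rtrancl_subset by blast+
      ultimately show False using hasse_edges_crossing_eq[OF e] by blast
    qed
  qed
  have "acyclic (insert (\<tau>\<^sub>1, \<sigma>\<^sub>1) R)"
    using acyclic_subset[OF acyclic_hasse_edges R] not_up(1) by (simp add: acyclic_insert)
  moreover have "(\<sigma>\<^sub>2, \<tau>\<^sub>2) \<notin> (insert (\<tau>\<^sub>1, \<sigma>\<^sub>1) R)\<^sup>*"
    using not_up(2) no_zigzag by (simp add: rtrancl_insert)
  moreover have "(hasse_edges K - ?W) \<union> ?W\<inverse> = insert (\<tau>\<^sub>2, \<sigma>\<^sub>2) (insert (\<tau>\<^sub>1, \<sigma>\<^sub>1) R)"
    unfolding R_def by auto
  ultimately show ?thesis unfolding acyclic_matching_def by (simp only: acyclic_insert) simp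
qed

lemma hasse_matching_subset: "hasse_matching K W \<Longrightarrow> V \<subseteq> W \<Longrightarrow> hasse_matching K V"
  unfolding hasse_matching_def by (meson subset_iff subset_trans)

lemma finite_hasse_edges: "simplicial_complex K \<Longrightarrow> finite (hasse_edges K)"
  unfolding simplicial_complex_def hasse_edges_def
  by (rule finite_subset[of _ "K \<times> K"]) auto

lemma acyclic_matching_card_le_2:
  assumes K: "simplicial_complex K" and M: "hasse_matching K W" and "card W \<le> 2"
  shows "acyclic_matching K W"
proof -
  have "finite W"
    using M finite_hasse_edges[OF K] finite_subset unfolding hasse_matching_def by blast
  have "W = {} \<or> (\<exists>e\<^sub>1 e\<^sub>2. W = {e\<^sub>1, e\<^sub>2})"
  proof -
    consider "card W = 0" | "card W = 1" | "card W = 2" using \<open>card W \<le> 2\<close> by linarith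
    then show ?thesis
    proof cases
      case 1
      then show ?thesis using \<open>finite W\<close> by simp
    next
      case 2
      then obtain e where "W = {e}" by (rule card_1_singletonE)
      then show ?thesis by blast
    next
      case 3
      then show ?thesis by (auto simp: card_2_iff)
    qed
  qed
  then show ?thesis
  proof
    assume "W = {}"
    then show ?thesis using acyclic_hasse_edges by (simp add: acyclic_matching_def)
  next
    assume "\<exists>e\<^sub>1 e\<^sub>2. W = {e\<^sub>1, e\<^sub>2}"
    then obtain \<sigma>\<^sub>1 \<tau>\<^sub>1 \<sigma>\<^sub>2 \<tau>\<^sub>2 where "W = {(\<sigma>\<^sub>1, \<tau>\<^sub>1), (\<sigma>\<^sub>2, \<tau>\<^sub>2)}" by auto
    with M show ?thesis using acyclic_matching_pair by blast
  qed
qed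

lemma simplicial_complex_gen_morse_complex:
  assumes "simplicial_complex K"
  shows "simplicial_complex (gen_morse_complex K)"
proof -
  have "gen_morse_complex K \<subseteq> Pow (hasse_edges K)"
    unfolding gen_morse_complex_def hasse_matching_def by blast
  then have "finite (gen_morse_complex K)" "\<forall>W\<in>gen_morse_complex K. finite W"
    using finite_hasse_edges[OF assms] by (auto intro: finite_subset)
  moreover have "V \<in> gen_morse_complex K" if "W \<in> gen_morse_complex K" "V \<subseteq> W" "V \<noteq> {}" for V W
    using that hasse_matching_subset unfolding gen_morse_complex_def by blast
  ultimately show ?thesis unfolding simplicial_complex_def gen_morse_complex_def by blast
qed

lemma morse_complex_subset_gen_morse_complex: "morse_complex K \<subseteq> gen_morse_complex K"
  unfolding morse_complex_def gen_morse_complex_def by blast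

lemma one_skeleton_morse_complex:
  assumes "simplicial_complex K"
  shows "one_skeleton (morse_complex K) = one_skeleton (gen_morse_complex K)"
  using acyclic_matching_card_le_2[OF assms] morse_complex_subset_gen_morse_complex
  unfolding one_skeleton_def morse_complex_def gen_morse_complex_def by blast

section \<open>Homotopy of paths in arbitrary topological spaces\<close>

lemma path_homotopic_top_of_set_iff: "path_homotopic (top_of_set S) p q \<longleftrightarrow> homotopic_paths S p q"
  unfolding path_homotopic_def homotopic_paths_def pathstart_def pathfinish_def ..

lemma simply_connected_space_top_of_set_iff:
  "simply_connected_space (top_of_set S) \<longleftrightarrow> path_connected S \<and>
     (\<forall>p. path p \<and> path_image p \<subseteq> S \<and> pathfinish p = pathstart p \<longrightarrow>
        homotopic_paths S p (\<lambda>_. pathstart p))"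
  unfolding simply_connected_space_def path_connected_space_euclidean_subtopology
    path_homotopic_top_of_set_iff pathin_canon_iff path_image_def pathstart_def pathfinish_def
  by (auto simp: Pi_iff image_subset_iff)

lemma pathstart_pathfinish_const [simp]: "pathstart (\<lambda>_. a) = a" "pathfinish (\<lambda>_. a) = a"
  by (simp_all add: pathstart_def pathfinish_def)

(* The library states the groupoid laws with linepath, which needs a normed vector space, and
   'a \<Rightarrow> real is none. Composing the laws for the identity path of {0..1} with p gives them for
   constant paths in any topological space. *)
lemma homotopic_paths_compose_interval:
  assumes "path p" "path_image p \<subseteq> S" "homotopic_paths {0..1} f g"
  shows "homotopic_paths S (p \<circ> f) (p \<circ> g)"
  using homotopic_paths_continuous_image[OF assms(3)] assms(1,2)
  unfolding path_def path_image_def by blast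

lemma comp_linepath_0_1: "p \<circ> linepath 0 (1::real) = p"
  by (simp add: linepath_def o_def)

lemma comp_linepath_refl: "p \<circ> linepath a a = (\<lambda>_. p a)"
  by (simp add: linepath_refl o_def)

lemma homotopic_paths_rid_const:
  assumes "path p" "path_image p \<subseteq> S"
  shows "homotopic_paths S (p +++ (\<lambda>_. pathfinish p)) p"
proof -
  have "homotopic_paths {0..1} (linepath 0 1 +++ linepath 1 1) (linepath (0::real) 1)"
    using homotopic_paths_rid[of "linepath (0::real) 1" "{0..1}"] by (simp add: closed_segment_eq_real_ivl)
  from homotopic_paths_compose_interval[OF assms this] show ?thesis
    by (simp add: path_compose_join comp_linepath_0_1 comp_linepath_refl pathstart_def pathfinish_def)
qed

lemma homotopic_paths_lid_const:
  assumes "path p" "path_image p \<subseteq> S"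
  shows "homotopic_paths S ((\<lambda>_. pathstart p) +++ p) p"
proof -
  have "homotopic_paths {0..1} (linepath 0 0 +++ linepath 0 1) (linepath (0::real) 1)"
    using homotopic_paths_lid[of "linepath (0::real) 1" "{0..1}"] by (simp add: closed_segment_eq_real_ivl)
  from homotopic_paths_compose_interval[OF assms this] show ?thesis
    by (simp add: path_compose_join comp_linepath_0_1 comp_linepath_refl pathstart_def pathfinish_def)
qed

lemma homotopic_paths_linv_const:
  assumes "path p" "path_image p \<subseteq> S"
  shows "homotopic_paths S (reversepath p +++ p) (\<lambda>_. pathfinish p)"
proof -
  have "homotopic_paths {0..1} (reversepath (linepath 0 1) +++ linepath 0 1) (linepath (1::real) 1)"
    using homotopic_paths_linv[of "linepath (0::real) 1" "{0..1}"] by (simp add: closed_segment_eq_real_ivl)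
  from homotopic_paths_compose_interval[OF assms this] show ?thesis
    by (simp add: path_compose_join path_compose_reversepath comp_linepath_0_1 comp_linepath_refl
        pathfinish_def del: reversepath_linepath)
qed

lemma homotopic_paths_null_if_conjugate_null:
  assumes g: "path g" "path_image g \<subseteq> S" and p: "path p" "path_image p \<subseteq> S"
    and ends: "pathfinish g = pathstart p" "pathfinish p = pathstart p"
    and null: "homotopic_paths S (g +++ p +++ reversepath g) (\<lambda>_. pathstart g)"
  shows "homotopic_paths S p (\<lambda>_. pathstart p)"
proof -
  note homotopic_paths_trans[trans]
  have rg: "path (reversepath g)" "path_image (reversepath g) \<subseteq> S" using g by simp_all
  have pg: "path (p +++ reversepath g)" "path_image (p +++ reversepath g) \<subseteq> S"
    using g p ends by (simp_all add: path_image_join)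
  have rid: "homotopic_paths S p (p +++ (\<lambda>_. pathstart p))"
    using homotopic_paths_sym[OF homotopic_paths_rid_const[OF p]] ends by simp
  have lid: "homotopic_paths S p ((\<lambda>_. pathstart p) +++ p)"
    using homotopic_paths_sym[OF homotopic_paths_lid_const[OF p]] .
  have linv: "homotopic_paths S (\<lambda>_. pathstart p) (reversepath g +++ g)"
    using homotopic_paths_sym[OF homotopic_paths_linv_const[OF g]] ends by simp
  have "homotopic_paths S (g +++ p) (g +++ (p +++ (\<lambda>_. pathstart p)))"
    using g rid ends by (intro homotopic_paths_join) auto
  also have "homotopic_paths S \<dots> (g +++ (p +++ (reversepath g +++ g)))"
    using g p linv ends by (intro homotopic_paths_join) auto
  also have "homotopic_paths S \<dots> (g +++ ((p +++ reversepath g) +++ g))"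
    using g p rg ends by (intro homotopic_paths_join homotopic_paths_assoc) auto
  also have "homotopic_paths S \<dots> ((g +++ p +++ reversepath g) +++ g)"
    using g pg ends by (intro homotopic_paths_assoc) auto
  also have "homotopic_paths S \<dots> ((\<lambda>_. pathstart g) +++ g)"
    using null g by (intro homotopic_paths_join) auto
  also have "homotopic_paths S \<dots> g"
    using homotopic_paths_lid_const[OF g] .
  finally have gp: "homotopic_paths S (g +++ p) g" .
  note lid
  also have "homotopic_paths S ((\<lambda>_. pathstart p) +++ p) ((reversepath g +++ g) +++ p)"
    using linv p ends by (intro homotopic_paths_join) auto
  also have "homotopic_paths S \<dots> (reversepath g +++ (g +++ p))"
    using homotopic_paths_assoc[of "reversepath g" S g p] g p rg ends
    by (auto intro: homotopic_paths_sym)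
  also have "homotopic_paths S \<dots> (reversepath g +++ g)"
    using gp rg by (intro homotopic_paths_join) auto
  also have "homotopic_paths S \<dots> (\<lambda>_. pathstart p)"
    using homotopic_paths_linv_const[OF g] ends by simp
  finally show ?thesis .
qed

lemma simply_connected_space_if_loops_deform:
  fixes S T :: "'a::topological_space set"
  assumes T: "simply_connected_space (top_of_set T)" and "T \<subseteq> S"
    and reach: "\<And>x. x \<in> S \<Longrightarrow> \<exists>y\<in>T. path_component S y x"
    and deform: "\<And>p. path p \<Longrightarrow> path_image p \<subseteq> S \<Longrightarrow> pathstart p \<in> T \<Longrightarrow>
        pathfinish p = pathstart p \<Longrightarrow>
        \<exists>q. path q \<and> path_image q \<subseteq> T \<and> pathstart q = pathstart p \<and> pathfinish q = pathstart p \<and>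
          homotopic_paths S p q"
  shows "simply_connected_space (top_of_set S)"
proof -
  have T_conn: "path_connected T"
    and T_null: "\<And>q. path q \<Longrightarrow> path_image q \<subseteq> T \<Longrightarrow> pathfinish q = pathstart q \<Longrightarrow>
        homotopic_paths T q (\<lambda>_. pathstart q)"
    using T unfolding simply_connected_space_top_of_set_iff by blast+
  have "path_component S x x'" if x: "x \<in> S" "x' \<in> S" for x x'
  proof -
    obtain y y' where "y \<in> T" "y' \<in> T" "path_component S y x" "path_component S y' x'"
      using reach x by meson
    moreover have "path_component S y y'"
      using T_conn \<open>y \<in> T\<close> \<open>y' \<in> T\<close> \<open>T \<subseteq> S\<close>
      by (meson path_component_of_subset path_connected_component)
    ultimately show ?thesis by (meson path_component_sym path_component_trans)
  qed
  then have "path_connected S" by (simp add: path_connected_component)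
  moreover have "homotopic_paths S p (\<lambda>_. pathstart p)"
    if p: "path p" "path_image p \<subseteq> S" "pathfinish p = pathstart p" for p
  proof -
    have "pathstart p \<in> S" using p by auto
    then obtain g where g: "path g" "path_image g \<subseteq> S" "pathstart g \<in> T" "pathfinish g = pathstart p"
      using reach unfolding path_component_def by blast
    let ?l = "g +++ p +++ reversepath g"
    have "path ?l" "path_image ?l \<subseteq> S" "pathstart ?l \<in> T" "pathfinish ?l = pathstart ?l"
      using g p by (auto simp: path_image_join)
    then obtain q where q: "path q" "path_image q \<subseteq> T" "pathstart q = pathstart g"
      "pathfinish q = pathstart g" "homotopic_paths S ?l q"
      using deform by force
    have "homotopic_paths S q (\<lambda>_. pathstart g)"
      using T_null[OF q(1,2)] q(3,4) homotopic_paths_subset[OF _ \<open>T \<subseteq> S\<close>] by simp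
    with q(5) have "homotopic_paths S ?l (\<lambda>_. pathstart g)" by (rule homotopic_paths_trans)
    with g p show ?thesis by (intro homotopic_paths_null_if_conjugate_null) auto
  qed
  ultimately show ?thesis unfolding simply_connected_space_top_of_set_iff by blast
qed

section \<open>Geometric realizations\<close>

lemma simplicial_complex_subset_closed:
  "simplicial_complex K \<Longrightarrow> \<sigma> \<in> K \<Longrightarrow> \<tau> \<subseteq> \<sigma> \<Longrightarrow> \<tau> \<noteq> {} \<Longrightarrow> \<tau> \<in> K"
  unfolding simplicial_complex_def by blast

definition supp :: "('a \<Rightarrow> real) \<Rightarrow> 'a set" where
  "supp x = {v. x v \<noteq> 0}"

lemma mem_geom_real_set_iff: "x \<in> geom_real_set L \<longleftrightarrow> x \<in> geom_real_set UNIV \<and> supp x \<in> L"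
  unfolding geom_real_set_def supp_def by auto

lemma geom_real_set_subset_UNIV: "geom_real_set L \<subseteq> geom_real_set UNIV"
  using mem_geom_real_set_iff by blast

lemma geom_real_setD:
  assumes "x \<in> geom_real_set L"
  shows "0 \<le> x v" "supp x \<in> L" "finite (supp x)" "supp x \<noteq> {}" "sum x (supp x) = 1"
proof -
  show "0 \<le> x v" "supp x \<in> L" "sum x (supp x) = 1"
    using assms unfolding geom_real_set_def supp_def by auto
  then show "finite (supp x)" "supp x \<noteq> {}" by (auto intro: sum.infinite ccontr)
qed

lemma supp_geom_real_set_iff: "x \<in> geom_real_set L \<Longrightarrow> v \<in> supp x \<longleftrightarrow> 0 < x v"
  using geom_real_setD(1)[of x L v] by (auto simp: supp_def)

lemma supp_indicator: "supp (indicator {v}) = {v}"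
  by (auto simp: supp_def indicator_def)

lemma indicator_in_geom_real_set: "{v} \<in> L \<Longrightarrow> indicator {v} \<in> geom_real_set L"
  by (simp add: geom_real_set_def supp_indicator[unfolded supp_def])

lemma supp_convex_combination:
  assumes "\<And>v. 0 \<le> x v" "\<And>v. 0 \<le> y v" "0 \<le> s" "s \<le> 1"
  shows "supp (\<lambda>v. (1 - s) * x v + s * y v) =
    (if s = 1 then {} else supp x) \<union> (if s = 0 then {} else supp y)"
proof -
  have "(1 - s) * x v + s * y v \<noteq> 0 \<longleftrightarrow> (s \<noteq> 1 \<and> x v \<noteq> 0) \<or> (s \<noteq> 0 \<and> y v \<noteq> 0)" for v
    using assms(1,2)[of v] assms(3,4) by (smt (verit) mult_eq_0_iff mult_nonneg_nonneg)
  then show ?thesis unfolding supp_def by auto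
qed

lemma convex_combination_in_geom_real_set:
  assumes x: "x \<in> geom_real_set L\<^sub>1" and y: "y \<in> geom_real_set L\<^sub>2" and s: "0 \<le> s" "s \<le> 1"
    and "supp (\<lambda>v. (1 - s) * x v + s * y v) \<in> L"
  shows "(\<lambda>v. (1 - s) * x v + s * y v) \<in> geom_real_set L"
proof -
  let ?z = "\<lambda>v. (1 - s) * x v + s * y v"
  define F where "F = supp x \<union> supp y"
  have F: "finite F" "supp x \<subseteq> F" "supp y \<subseteq> F" "supp ?z \<subseteq> F"
    using geom_real_setD(3)[OF x] geom_real_setD(3)[OF y] unfolding F_def supp_def by auto
  have sum_F: "sum w F = sum w (supp w)" if "supp w \<subseteq> F" for w
    using F(1) that by (intro sum.mono_neutral_right) (auto simp: supp_def)
  have "sum ?z (supp ?z) = sum ?z F" using sum_F[OF F(4)] ..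
  also have "\<dots> = (1 - s) * sum x F + s * sum y F" by (simp add: sum.distrib sum_distrib_left)
  also have "\<dots> = (1 - s) * sum x (supp x) + s * sum y (supp y)" using sum_F F(2,3) by simp
  also have "\<dots> = 1" using geom_real_setD(5)[OF x] geom_real_setD(5)[OF y] by simp
  finally show ?thesis
    using assms geom_real_setD(1)[OF x] geom_real_setD(1)[OF y] unfolding geom_real_set_def supp_def
    by auto
qed

lemma geom_real_eq_top_of_set: "geom_real L = top_of_set (geom_real_set L)"
  unfolding geom_real_def by (simp add: euclidean_product_topology)

lemma topspace_geom_real: "topspace (geom_real L) = geom_real_set L"
  by (simp add: geom_real_eq_top_of_set)

lemma pathin_geom_real_iff: "pathin (geom_real L) p \<longleftrightarrow> path p \<and> path_image p \<subseteq> geom_real_set L"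
  unfolding geom_real_eq_top_of_set pathin_canon_iff path_image_def by blast

lemma path_homotopic_geom_real_iff:
  "path_homotopic (geom_real L) p q \<longleftrightarrow> homotopic_paths (geom_real_set L) p q"
  by (simp add: geom_real_eq_top_of_set path_homotopic_top_of_set_iff)

section \<open>Deforming paths into a subcomplex\<close>

lemma path_coordinate_continuous:
  fixes p :: "real \<Rightarrow> 'a \<Rightarrow> real"
  shows "path p \<Longrightarrow> continuous_on {0..1} (\<lambda>t. p t v)"
  unfolding path_def by (rule continuous_on_product_then_coordinatewise)

lemma path_supp_lower_semicontinuous:
  fixes p :: "real \<Rightarrow> 'a \<Rightarrow> real"
  assumes p: "path p" "path_image p \<subseteq> geom_real_set UNIV" and t\<^sub>0: "t\<^sub>0 \<in> {0..1}"
  obtains r where "0 < r" "\<And>t. t \<in> {0..1} \<Longrightarrow> dist t t\<^sub>0 < r \<Longrightarrow> supp (p t\<^sub>0) \<subseteq> supp (p t)"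
proof -
  have pt: "p t \<in> geom_real_set UNIV" if "t \<in> {0..1}" for t
    using p(2) that unfolding path_image_def by blast
  have "\<forall>\<^sub>F t in at t\<^sub>0 within {0..1}. 0 < p t v" if "v \<in> supp (p t\<^sub>0)" for v
  proof (rule order_tendstoD(1))
    show "((\<lambda>t. p t v) \<longlongrightarrow> p t\<^sub>0 v) (at t\<^sub>0 within {0..1})"
      using path_coordinate_continuous[OF p(1)] t\<^sub>0 continuous_on_def by blast
  qed (use that supp_geom_real_set_iff[OF pt[OF t\<^sub>0]] in blast)
  then have "\<forall>\<^sub>F t in at t\<^sub>0 within {0..1}. \<forall>v\<in>supp (p t\<^sub>0). 0 < p t v"
    using geom_real_setD(3)[OF pt[OF t\<^sub>0]] by (simp add: eventually_ball_finite)
  then obtain r where "0 < r"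
    and r: "\<And>t. t \<in> {0..1} \<Longrightarrow> t \<noteq> t\<^sub>0 \<Longrightarrow> dist t t\<^sub>0 < r \<Longrightarrow> \<forall>v\<in>supp (p t\<^sub>0). 0 < p t v"
    by (auto simp: eventually_at)
  show ?thesis
  proof (rule that[OF \<open>0 < r\<close>])
    fix t assume t: "t \<in> {0..1}" "dist t t\<^sub>0 < r"
    show "supp (p t\<^sub>0) \<subseteq> supp (p t)"
    proof (cases "t = t\<^sub>0")
      case False
      then show ?thesis using r[OF t(1) False t(2)] supp_geom_real_set_iff[OF pt[OF t(1)]] by blast
    qed simp
  qed
qed

lemma path_supp_Lebesgue:
  fixes p :: "real \<Rightarrow> 'a \<Rightarrow> real"
  assumes p: "path p" "path_image p \<subseteq> geom_real_set UNIV"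
  obtains e f where "0 < e"
    "\<And>t s. t \<in> {0..1} \<Longrightarrow> s \<in> {0..1} \<Longrightarrow> dist s t < e \<Longrightarrow> f t \<in> supp (p s)"
proof -
  have "\<exists>v r. 0 < r \<and> (\<forall>s\<in>{0..1}. dist s t < r \<longrightarrow> v \<in> supp (p s))" if t: "t \<in> {0..1}" for t
  proof -
    have "p t \<in> geom_real_set UNIV" using p(2) t unfolding path_image_def by blast
    then obtain v where "v \<in> supp (p t)" using geom_real_setD(4) by blast
    moreover obtain r where "0 < r" "\<And>s. s \<in> {0..1} \<Longrightarrow> dist s t < r \<Longrightarrow> supp (p t) \<subseteq> supp (p s)"
      using path_supp_lower_semicontinuous[OF p t] by blast
    ultimately show ?thesis by blast
  qed
  then obtain v r where vr: "\<And>t. t \<in> {0..1} \<Longrightarrow> 0 < r t \<and> (\<forall>s\<in>{0..1}. dist s t < r t \<longrightarrow> v t \<in> supp (p s))"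
    by metis
  let ?\<G> = "(\<lambda>t. ball t (r t)) ` {0..1}"
  have cover: "{0..1} \<subseteq> \<Union> ?\<G>"
  proof
    fix t :: real assume "t \<in> {0..1}"
    then have "t \<in> ball t (r t)" "ball t (r t) \<in> ?\<G>" using vr by auto
    then show "t \<in> \<Union> ?\<G>" by blast
  qed
  obtain e where "0 < e" and e: "\<And>t. t \<in> {0..1} \<Longrightarrow> \<exists>G\<in>?\<G>. ball t e \<subseteq> G"
    using Heine_Borel_lemma[OF compact_Icc cover] by blast
  have "\<forall>t::real\<in>{0..1}. \<exists>c\<in>{0..1}. ball t e \<subseteq> ball c (r c)" using e by fast
  then obtain c where c: "\<And>t::real. t \<in> {0..1} \<Longrightarrow> c t \<in> {0..1} \<and> ball t e \<subseteq> ball (c t) (r (c t))"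
    by metis
  show ?thesis
  proof (rule that[OF \<open>0 < e\<close>])
    fix t s :: real assume ts: "t \<in> {0..1}" "s \<in> {0..1}" "dist s t < e"
    then have "s \<in> ball t e" by (simp add: dist_commute)
    then have "s \<in> ball (c t) (r (c t))" using c[OF ts(1)] by blast
    then show "(v \<circ> c) t \<in> supp (p s)" using vr c ts(1,2) by (auto simp: dist_commute)
  qed
qed

(* Linear interpolation of w 0, ..., w m at the times k / m, written with hat functions. *)
definition piecewise_linear_path :: "nat \<Rightarrow> (nat \<Rightarrow> 'a \<Rightarrow> real) \<Rightarrow> real \<Rightarrow> 'a \<Rightarrow> real" where
  "piecewise_linear_path m w t = (\<lambda>v. \<Sum>k\<le>m. max 0 (1 - \<bar>real m * t - real k\<bar>) * w k v)"

lemma path_piecewise_linear_path: "path (piecewise_linear_path m w)"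
  unfolding path_def piecewise_linear_path_def
  by (intro continuous_on_coordinatewise_then_product continuous_intros)

lemma piecewise_linear_path_eq:
  assumes "j < m" "0 \<le> l" "l \<le> 1" "real m * t = real j + l"
  shows "piecewise_linear_path m w t = (\<lambda>v. (1 - l) * w j v + l * w (Suc j) v)"
proof
  fix v
  have "max 0 (1 - \<bar>real m * t - real k\<bar>) = 0" if "k \<notin> {j, Suc j}" for k
    using that assms by (cases "k < j") (auto simp: abs_if)
  then have "(\<Sum>k\<le>m. max 0 (1 - \<bar>real m * t - real k\<bar>) * w k v) =
      (\<Sum>k\<in>{j, Suc j}. max 0 (1 - \<bar>real m * t - real k\<bar>) * w k v)"
    using assms(1) by (intro sum.mono_neutral_right) auto
  also have "\<dots> = (1 - l) * w j v + l * w (Suc j) v"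
    using assms by (simp add: abs_if max_def)
  finally show "piecewise_linear_path m w t v = (1 - l) * w j v + l * w (Suc j) v"
    unfolding piecewise_linear_path_def .
qed

lemma unit_interval_subdivision:
  assumes "0 < m" "t \<in> {0..1}"
  obtains j l where "j < m" "0 \<le> l" "l \<le> 1" "real m * t = real j + l"
proof (cases "t = 1")
  case True
  with assms show ?thesis by (intro that[of "m - 1" 1]) (auto simp: of_nat_diff)
next
  case False
  define j where "j = nat \<lfloor>real m * t\<rfloor>"
  have "real j \<le> real m * t" "real m * t < real j + 1" using assms unfolding j_def by auto
  moreover have "real m * t < real m" using assms False by auto
  ultimately show ?thesis by (intro that[of j "real m * t - real j"]) auto
qed

lemma path_supp_near_ends:
  fixes p :: "real \<Rightarrow> 'a \<Rightarrow> real"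
  assumes p: "path p" "path_image p \<subseteq> geom_real_set UNIV"
  obtains r where "0 < r" "\<And>t. t \<in> {0..1} \<Longrightarrow> t < r \<Longrightarrow> supp (p 0) \<subseteq> supp (p t)"
    "\<And>t. t \<in> {0..1} \<Longrightarrow> 1 - r < t \<Longrightarrow> supp (p 1) \<subseteq> supp (p t)"
proof -
  obtain r\<^sub>0 where "0 < r\<^sub>0" and r\<^sub>0: "\<And>t. t \<in> {0..1} \<Longrightarrow> dist t 0 < r\<^sub>0 \<Longrightarrow> supp (p 0) \<subseteq> supp (p t)"
    by (rule path_supp_lower_semicontinuous[OF p, of 0]) auto
  obtain r\<^sub>1 where "0 < r\<^sub>1" and r\<^sub>1: "\<And>t. t \<in> {0..1} \<Longrightarrow> dist t 1 < r\<^sub>1 \<Longrightarrow> supp (p 1) \<subseteq> supp (p t)"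
    by (rule path_supp_lower_semicontinuous[OF p, of 1]) auto
  show ?thesis
  proof (rule that[of "min r\<^sub>0 r\<^sub>1"])
    show "0 < min r\<^sub>0 r\<^sub>1" using \<open>0 < r\<^sub>0\<close> \<open>0 < r\<^sub>1\<close> by simp
  qed (use r\<^sub>0 r\<^sub>1 in \<open>auto simp: dist_real_def\<close>)
qed

(* V 1 and V (m - 1) are taken in the supports of the end points, so that the first and last
   segments of the interpolating path stay in the simplices carrying the end points. *)
lemma path_vertex_subdivision:
  fixes p :: "real \<Rightarrow> 'a \<Rightarrow> real"
  assumes p: "path p" "path_image p \<subseteq> geom_real_set UNIV"
  obtains m :: nat and V where "2 < m" "V 1 \<in> supp (p 0)" "V (m - 1) \<in> supp (p 1)"
    "\<And>t. t \<in> {0..1} \<Longrightarrow> real m * t < 1 \<Longrightarrow> supp (p 0) \<subseteq> supp (p t)"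
    "\<And>t. t \<in> {0..1} \<Longrightarrow> real m - 1 < real m * t \<Longrightarrow> supp (p 1) \<subseteq> supp (p t)"
    "\<And>k t. 0 < k \<Longrightarrow> k < m \<Longrightarrow> t \<in> {0..1} \<Longrightarrow> \<bar>real m * t - real k\<bar> < 1 \<Longrightarrow> V k \<in> supp (p t)"
proof -
  obtain r where "0 < r" and r\<^sub>0: "\<And>t. t \<in> {0..1} \<Longrightarrow> t < r \<Longrightarrow> supp (p 0) \<subseteq> supp (p t)"
    and r\<^sub>1: "\<And>t. t \<in> {0..1} \<Longrightarrow> 1 - r < t \<Longrightarrow> supp (p 1) \<subseteq> supp (p t)"
    by (rule path_supp_near_ends[OF p]) (rule that)
  obtain e f where "0 < e" and e: "\<And>t s. t \<in> {0..1} \<Longrightarrow> s \<in> {0..1} \<Longrightarrow> dist s t < e \<Longrightarrow> f t \<in> supp (p s)"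
    by (rule path_supp_Lebesgue[OF p]) (rule that)
  have "p 0 \<in> geom_real_set UNIV" "p 1 \<in> geom_real_set UNIV" using p(2) by (auto simp: path_image_def)
  then obtain u u' where u: "u \<in> supp (p 0)" "u' \<in> supp (p 1)" using geom_real_setD(4) by blast
  define d where "d = min e r"
  have "0 < d" unfolding d_def using \<open>0 < e\<close> \<open>0 < r\<close> by simp
  obtain m :: nat where "max 2 (2 / d) < real m" using reals_Archimedean2 by blast
  then have "2 < m" "2 / real m < d" using \<open>0 < d\<close> by (auto simp: field_simps)
  then have m_pos: "0 < real m" and m_small: "2 / real m < e" "2 / real m < r"
    unfolding d_def by simp_all
  have start: "supp (p 0) \<subseteq> supp (p t)" if t: "t \<in> {0..1}" "real m * t < 2" for t
  proof -
    have "t < 2 / real m" using t(2) m_pos by (simp add: field_simps)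
    then show ?thesis using r\<^sub>0[OF t(1)] m_small(2) by simp
  qed
  have finish: "supp (p 1) \<subseteq> supp (p t)" if t: "t \<in> {0..1}" "real m - 2 < real m * t" for t
  proof -
    have "1 - 2 / real m < t" using t(2) m_pos by (simp add: field_simps)
    then show ?thesis using r\<^sub>1[OF t(1)] m_small(2) by simp
  qed
  define V where "V k = (if k = 1 then u else if k = m - 1 then u' else f (real k / real m))" for k
  have "V k \<in> supp (p t)"
    if k: "0 < k" "k < m" and t: "t \<in> {0..1}" and kt: "\<bar>real m * t - real k\<bar> < 1" for k t
  proof -
    consider "k = 1" | "k = m - 1" | "k \<noteq> 1" "k \<noteq> m - 1" by blast
    then show ?thesis
    proof cases
      case 1
      then have "real m * t < 2" using kt by (simp add: abs_less_iff)
      then show ?thesis using start[OF t] u 1 unfolding V_def by auto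
    next
      case 2
      then have "real m - 2 < real m * t" using kt \<open>2 < m\<close> by (simp add: abs_less_iff of_nat_diff)
      then show ?thesis using finish[OF t] u 2 \<open>2 < m\<close> unfolding V_def by auto
    next
      case 3
      have "dist t (real k / real m) = \<bar>real m * t - real k\<bar> / real m"
        using m_pos by (simp add: dist_real_def field_simps)
      also have "\<dots> < e" using kt m_small m_pos by (auto simp: field_simps)
      finally show ?thesis using e[of "real k / real m" t] t k 3 m_pos unfolding V_def by auto
    qed
  qed
  moreover have "V 1 \<in> supp (p 0)" "V (m - 1) \<in> supp (p 1)" using u \<open>2 < m\<close> unfolding V_def by auto
  ultimately show ?thesis using that[of m V] \<open>2 < m\<close> start finish by force
qed

lemma homotopic_paths_straight_line_geom_real_set:
  assumes p: "path p" "path_image p \<subseteq> geom_real_set L"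
    and q: "path q" "path_image q \<subseteq> geom_real_set L"
    and supp_le: "\<And>t. t \<in> {0..1} \<Longrightarrow> supp (q t) \<subseteq> supp (p t)"
    and ends: "pathstart q = pathstart p" "pathfinish q = pathfinish p"
  shows "homotopic_paths (geom_real_set L) p q"
  unfolding homotopic_paths
proof (intro exI conjI)
  define h where "h = (\<lambda>z::real \<times> real. \<lambda>v. (1 - fst z) * p (snd z) v + fst z * q (snd z) v)"
  show "continuous_on ({0..1} \<times> {0..1}) h"
    unfolding h_def
  proof (intro continuous_on_coordinatewise_then_product continuous_intros)
    fix v
    show "continuous_on ({0..1} \<times> {0..1}) (\<lambda>z. p (snd z) v)" "continuous_on ({0..1} \<times> {0..1}) (\<lambda>z. q (snd z) v)"
      by (auto intro!: continuous_on_compose2[OF path_coordinate_continuous continuous_on_snd] p q)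
  qed
  show "h \<in> {0..1} \<times> {0..1} \<rightarrow> geom_real_set L"
  proof
    fix z :: "real \<times> real" assume "z \<in> {0..1} \<times> {0..1}"
    then obtain s t where z: "z = (s, t)" "s \<in> {0..1}" "t \<in> {0..1}" by auto
    then have pt: "p t \<in> geom_real_set L" and qt: "q t \<in> geom_real_set L"
      using p(2) q(2) unfolding path_image_def by auto
    have "supp (h z) = (if s = 1 then supp (q t) else supp (p t))"
      using supp_convex_combination[of "p t" "q t" s] geom_real_setD(1)[OF pt] geom_real_setD(1)[OF qt]
        supp_le[OF z(3)] z unfolding h_def by auto
    then have "supp (h z) \<in> L" using geom_real_setD(2)[OF pt] geom_real_setD(2)[OF qt] by simp
    then show "h z \<in> geom_real_set L"
      using convex_combination_in_geom_real_set[OF pt qt] z unfolding h_def by simp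
  qed
  show "\<forall>t\<in>{0..1}. h (0, t) = p t" "\<forall>t\<in>{0..1}. h (1, t) = q t" unfolding h_def by simp_all
  show "\<forall>s\<in>{0..1}. pathstart (h \<circ> Pair s) = pathstart p \<and> pathfinish (h \<circ> Pair s) = pathfinish p"
    using ends unfolding h_def pathstart_def pathfinish_def by (auto simp: algebra_simps)
qed

lemma piecewise_linear_path_in_subcomplex:
  assumes L': "simplicial_complex L'" and skel: "one_skeleton L' \<subseteq> L" and "2 < m"
    and w: "\<And>k. w k \<in> geom_real_set UNIV"
    and vertices: "\<And>k. 0 < k \<Longrightarrow> k < m \<Longrightarrow> card (supp (w k)) = 1"
    and ends: "w 0 \<in> geom_real_set L" "w m \<in> geom_real_set L"
    and first_last: "supp (w 1) \<subseteq> supp (w 0)" "supp (w (m - 1)) \<subseteq> supp (w m)"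
    and y: "y \<in> geom_real_set L'" and t: "t \<in> {0..1}"
    and carried: "\<And>k. k \<le> m \<Longrightarrow> \<bar>real m * t - real k\<bar> < 1 \<Longrightarrow> supp (w k) \<subseteq> supp y"
  shows "piecewise_linear_path m w t \<in> geom_real_set L"
    "piecewise_linear_path m w t \<in> geom_real_set L'"
    "supp (piecewise_linear_path m w t) \<subseteq> supp y"
proof -
  let ?q = "piecewise_linear_path m w t"
  obtain j l where jl: "j < m" "0 \<le> l" "l \<le> 1" "real m * t = real j + l"
    using unit_interval_subdivision[of m t] \<open>2 < m\<close> t by auto
  define S\<^sub>0 where "S\<^sub>0 = (if l = 1 then {} else supp (w j))"
  define S\<^sub>1 where "S\<^sub>1 = (if l = 0 then {} else supp (w (Suc j)))"
  have q_eq: "?q = (\<lambda>v. (1 - l) * w j v + l * w (Suc j) v)"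
    using piecewise_linear_path_eq[OF jl] .
  have supp_q: "supp ?q = S\<^sub>0 \<union> S\<^sub>1"
    unfolding q_eq S\<^sub>0_def S\<^sub>1_def
    using supp_convex_combination[of "w j" "w (Suc j)" l] geom_real_setD(1)[OF w] jl by simp
  show sub: "supp ?q \<subseteq> supp y"
    using supp_q carried[of j] carried[of "Suc j"] jl unfolding S\<^sub>0_def S\<^sub>1_def by auto
  have q_simplex: "?q \<in> geom_real_set UNIV"
    unfolding q_eq using convex_combination_in_geom_real_set[OF w w] jl by simp
  have "supp ?q \<in> L'"
    using simplicial_complex_subset_closed[OF L' geom_real_setD(2)[OF y] sub
        geom_real_setD(4)[OF q_simplex]] .
  with q_simplex show "?q \<in> geom_real_set L'" by (simp add: mem_geom_real_set_iff[of ?q L'])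
  have "supp ?q \<in> L"
  proof (cases "j = 0 \<and> l \<noteq> 1 \<or> Suc j = m \<and> l \<noteq> 0")
    case True
    then have "supp ?q = supp (w 0) \<or> supp ?q = supp (w m)"
      using supp_q first_last unfolding S\<^sub>0_def S\<^sub>1_def by auto
    then show ?thesis using ends geom_real_setD(2) by metis
  next
    case False
    then have "card S\<^sub>0 \<le> 1" "card S\<^sub>1 \<le> 1"
      using vertices[of j] vertices[of "Suc j"] jl(1) unfolding S\<^sub>0_def S\<^sub>1_def by auto
    then have "card (supp ?q) \<le> 2" using supp_q card_Un_le[of S\<^sub>0 S\<^sub>1] by simp
    with \<open>supp ?q \<in> L'\<close> show ?thesis using skel unfolding one_skeleton_def by blast
  qed
  with q_simplex show "?q \<in> geom_real_set L" by (simp add: mem_geom_real_set_iff[of ?q L])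
qed

lemma path_homotopic_into_subcomplex:
  assumes L': "simplicial_complex L'" and skel: "one_skeleton L' \<subseteq> L"
    and p: "path p" "path_image p \<subseteq> geom_real_set L'"
    and ends: "pathstart p \<in> geom_real_set L" "pathfinish p \<in> geom_real_set L"
  obtains q where "path q" "path_image q \<subseteq> geom_real_set L"
    "pathstart q = pathstart p" "pathfinish q = pathfinish p" "homotopic_paths (geom_real_set L') p q"
proof -
  have pt: "p t \<in> geom_real_set L'" if "t \<in> {0..1}" for t
    using p(2) that unfolding path_image_def by blast
  have "path_image p \<subseteq> geom_real_set UNIV" using p(2) geom_real_set_subset_UNIV by blast
  then obtain m V where "2 < m" and V: "V 1 \<in> supp (p 0)" "V (m - 1) \<in> supp (p 1)"
    and start: "\<And>t. t \<in> {0..1} \<Longrightarrow> real m * t < 1 \<Longrightarrow> supp (p 0) \<subseteq> supp (p t)"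
    and finish: "\<And>t. t \<in> {0..1} \<Longrightarrow> real m - 1 < real m * t \<Longrightarrow> supp (p 1) \<subseteq> supp (p t)"
    and inner: "\<And>k t. 0 < k \<Longrightarrow> k < m \<Longrightarrow> t \<in> {0..1} \<Longrightarrow> \<bar>real m * t - real k\<bar> < 1 \<Longrightarrow> V k \<in> supp (p t)"
    by (rule path_vertex_subdivision[OF p(1)]) (rule that)
  define w where "w k = (if k = 0 then p 0 else if k = m then p 1 else indicator {V k})" for k
  define q where "q = piecewise_linear_path m w"
  have ends': "w 0 \<in> geom_real_set L" "w m \<in> geom_real_set L"
    using ends \<open>2 < m\<close> unfolding w_def pathstart_def pathfinish_def by auto
  have w: "w k \<in> geom_real_set UNIV" for k
  proof (cases "k = 0 \<or> k = m")
    case True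
    then show ?thesis using ends' geom_real_set_subset_UNIV by blast
  qed (simp add: w_def indicator_in_geom_real_set)
  have supp_w: "supp (w k) = {V k}" if "0 < k" "k < m" for k
    using that unfolding w_def by (simp add: supp_indicator)
  have first_last: "supp (w 1) \<subseteq> supp (w 0)" "supp (w (m - 1)) \<subseteq> supp (w m)"
    using V supp_w[of 1] supp_w[of "m - 1"] \<open>2 < m\<close> unfolding w_def by auto
  have carried: "supp (w k) \<subseteq> supp (p t)"
    if "k \<le> m" "t \<in> {0..1}" "\<bar>real m * t - real k\<bar> < 1" for k t
    using that start finish inner[of k t] supp_w[of k] unfolding w_def by (auto simp: of_nat_diff)
  have vertices: "card (supp (w k)) = 1" if "0 < k" "k < m" for k
    using supp_w[OF that] by simp
  have q_t: "q t \<in> geom_real_set L" "q t \<in> geom_real_set L'" "supp (q t) \<subseteq> supp (p t)"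
    if t: "t \<in> {0..1}" for t
    using piecewise_linear_path_in_subcomplex[OF L' skel \<open>2 < m\<close> w vertices ends' first_last
        pt[OF t] t carried[OF _ t]]
    unfolding q_def by blast+
  then have q_image: "path_image q \<subseteq> geom_real_set L'" "path_image q \<subseteq> geom_real_set L"
    unfolding path_image_def by blast+
  have q: "path q" unfolding q_def by (rule path_piecewise_linear_path)
  have q_ends: "pathstart q = pathstart p" "pathfinish q = pathfinish p"
    using piecewise_linear_path_eq[of 0 m 0 0 w] piecewise_linear_path_eq[of "m - 1" m 1 1 w] \<open>2 < m\<close>
    unfolding q_def w_def pathstart_def pathfinish_def by (simp_all add: of_nat_diff)
  have "homotopic_paths (geom_real_set L') p q"
    by (rule homotopic_paths_straight_line_geom_real_set[OF p q q_image(1) q_t(3) q_ends])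
  with q q_image(2) q_ends show ?thesis by (rule that)
qed

lemma loop_path_homotopic_into_subcomplex:
  assumes L': "simplicial_complex L'" and skel: "one_skeleton L' \<subseteq> L"
    and a: "a \<in> topspace (geom_real L)" and p: "pathin (geom_real L') p" "p 0 = a" "p 1 = a"
  shows "\<exists>q. pathin (geom_real L) q \<and> q 0 = a \<and> q 1 = a \<and> path_homotopic (geom_real L') p q"
proof -
  have "path p" "path_image p \<subseteq> geom_real_set L'"
    "pathstart p \<in> geom_real_set L" "pathfinish p \<in> geom_real_set L"
    using a p by (auto simp: pathin_geom_real_iff topspace_geom_real pathstart_def pathfinish_def)
  then obtain q where "path q" "path_image q \<subseteq> geom_real_set L"
    "pathstart q = pathstart p" "pathfinish q = pathfinish p" "homotopic_paths (geom_real_set L') p q"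
    by (rule path_homotopic_into_subcomplex[OF L' skel])
  with p show ?thesis
    by (intro exI[of _ q])
      (auto simp: pathin_geom_real_iff path_homotopic_geom_real_iff pathstart_def pathfinish_def)
qed

lemma geom_real_set_reaches_vertex:
  assumes L': "simplicial_complex L'"
    and skel: "one_skeleton L' \<subseteq> L" and x: "x \<in> geom_real_set L'"
  shows "\<exists>y\<in>geom_real_set L. path_component (geom_real_set L') y x"
proof -
  obtain v where v: "v \<in> supp x" using geom_real_setD(4)[OF x] by blast
  have "{v} \<in> L'" using simplicial_complex_subset_closed[OF L' geom_real_setD(2)[OF x]] v by blast
  then have v_L: "{v} \<in> L" using skel unfolding one_skeleton_def by auto
  let ?g = "\<lambda>s w. (1 - s) * indicator {v} w + s * x w"
  have "?g s \<in> geom_real_set L'" if "s \<in> {0..1}" for s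
  proof (rule convex_combination_in_geom_real_set)
    show "indicator {v} \<in> geom_real_set L'" by (rule indicator_in_geom_real_set) fact
    show "supp (?g s) \<in> L'"
      using supp_convex_combination[of "indicator {v}" x s] geom_real_setD(1)[OF x] that v
        \<open>{v} \<in> L'\<close> geom_real_setD(2)[OF x]
      by (auto simp: supp_indicator insert_absorb)
  qed (use x that in auto)
  moreover have "path ?g"
    unfolding path_def by (intro continuous_on_coordinatewise_then_product continuous_intros)
  ultimately have "path_component (geom_real_set L') (?g 0) (?g 1)"
    unfolding path_component_def path_image_def pathstart_def pathfinish_def by blast
  moreover have "?g 0 = indicator {v}" "?g 1 = x" by auto
  ultimately show ?thesis using indicator_in_geom_real_set[OF v_L] by auto
qed

lemma simply_connected_space_geom_real_if_one_skeleton: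
  assumes L': "simplicial_complex L'"
    and skel: "one_skeleton L' \<subseteq> L" and sub: "L \<subseteq> L'"
    and sc: "simply_connected_space (geom_real L)"
  shows "simply_connected_space (geom_real L')"
  unfolding geom_real_eq_top_of_set
proof (rule simply_connected_space_if_loops_deform)
  show "simply_connected_space (top_of_set (geom_real_set L))"
    using sc by (simp add: geom_real_eq_top_of_set)
  show "geom_real_set L \<subseteq> geom_real_set L'" using sub unfolding geom_real_set_def by blast
  show "\<exists>y\<in>geom_real_set L. path_component (geom_real_set L') y x" if "x \<in> geom_real_set L'" for x
    using geom_real_set_reaches_vertex[OF L' skel that] .
  show "\<exists>q. path q \<and> path_image q \<subseteq> geom_real_set L \<and> pathstart q = pathstart p \<and>
      pathfinish q = pathstart p \<and> homotopic_paths (geom_real_set L') p q"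
    if "path p" "path_image p \<subseteq> geom_real_set L'" "pathstart p \<in> geom_real_set L"
      "pathfinish p = pathstart p" for p
    using path_homotopic_into_subcomplex[OF L' skel that(1,2,3)] that(3,4) by metis
qed

theorem mainTheorem13:
  fixes K :: "'v set set"
  assumes "simplicial_complex K"
  shows "(\<forall>W. hasse_matching K W \<and> card W \<le> 2 \<longrightarrow> acyclic_matching K W)
    \<and> one_skeleton (morse_complex K) = one_skeleton (gen_morse_complex K)
    \<and> (\<forall>a \<in> topspace (geom_real (morse_complex K)).
         \<forall>p. pathin (geom_real (gen_morse_complex K)) p \<and> p 0 = a \<and> p 1 = a \<longrightarrow>
           (\<exists>q. pathin (geom_real (morse_complex K)) q \<and> q 0 = a \<and> q 1 = a \<and>
                path_homotopic (geom_real (gen_morse_complex K)) p q))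
    \<and> (simply_connected_space (geom_real (morse_complex K)) \<longrightarrow>
         simply_connected_space (geom_real (gen_morse_complex K)))"
proof -
  have GM: "simplicial_complex (gen_morse_complex K)"
    using simplicial_complex_gen_morse_complex[OF assms] .
  have skel: "one_skeleton (gen_morse_complex K) \<subseteq> morse_complex K"
    using one_skeleton_morse_complex[OF assms] unfolding one_skeleton_def by blast
  show ?thesis
    using acyclic_matching_card_le_2[OF assms] one_skeleton_morse_complex[OF assms]
      loop_path_homotopic_into_subcomplex[OF GM skel]
      simply_connected_space_geom_real_if_one_skeleton[OF GM skel morse_complex_subset_gen_morse_complex]
    by blast
qed

end
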